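(* Let $(\bar\xi,\bar x)\in\widetilde\Omega\cap\operatorname{gph}E$ be a local solution to (MPEC). Suppose that: (i) $\varphi$ is locally Lipschitz around $(\bar\xi,\bar x)$; (ii) $\operatorname{gph}E$ is closed; (iii) $\widetilde\Omega$ and $\operatorname{gph}E$ are subtransversal at $(\bar\xi,\bar x)$; (iv) a uniform error bound holds around $(\bar\xi,\bar x)$, i.e. there exist $\delta,\gamma>0$ such that $\operatorname{dist}(x,E(\xi))\le\mathfrak m(\xi,x)/\gamma$ for all $(\xi,x)\in\mathbb B(\bar\xi,\delta)\times\mathbb B(\bar x,\delta)$. Then there exists $\lambda>0$ such that $(\bar\xi,\bar x)$ is a local (unconstrained) minimizer of $$(\xi,x)\mapsto \varphi(\xi,x)+\lambda\Big(\operatorname{dist}(\xi,\Omega)+\frac{\mathfrak m(\xi,x)}{\gamma}\Big).$$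
   Context: $C\subset\mathbb R^m$ nontrivial closed convex pointed cone; $f:\mathbb R^p\times\mathbb R^n\times\mathbb R^n\to\mathbb R^m$; $K:\mathbb R^p\rightrightarrows\mathbb R^n$ has closed graph and nonempty values everywhere. VEP($\xi$): find $x\in K(\xi)$ with $f(\xi,x,z)\in C$ for all $z\in K(\xi)$; $E(\xi)$ is its solution set (with $\operatorname{dist}(x,\emptyset)=+\infty$). $\nu(\xi,x)=\sup_{z\in K(\xi)}\operatorname{dist}(f(\xi,x,z),C)$, $\mu(\xi,x)=\operatorname{dist}(x,K(\xi))$, $\mathfrak m=\nu+\mu$. (MPEC): minimize $\varphi(\xi,x)$ subject to $x\in E(\xi)$, $\xi\in\Omega$, where $\varphi:\mathbb R^p\times\mathbb R^n\to\mathbb R$ and $\Omega\subseteq\mathbb R^p$ is closed; $\widetilde\Omega=\Omega\times\mathbb R^n$. Two sets $S_1,S_2$ are subtransversal at $\bar s\in S_1\cap S_2$ if there exist $\alpha,\delta>0$ such that $(S_1+\alpha\rho\mathbb B)\cap(S_2+\alpha\rho\mathbb B)\cap\mathbb B(\bar s,\delta)\subseteq(S_1\cap S_2)+\rho\mathbb B$ for all $\rho\in[0,\delta)$; equivalently, there exist $\kappa,r>0$ with $\operatorname{dist}(w,S_1\cap S_2)\le\kappa\max\{\operatorname{dist}(w,S_1),\operatorname{dist}(w,S_2)\}$ for all $w\in\mathbb B(\bar s,r)$. *)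

theory Defs
  imports "HOL-Analysis.Analysis"
begin

definition edist :: "'a::metric_space \<Rightarrow> 'a set \<Rightarrow> ereal" where
  "edist x S = (if S = {} then \<infinity> else ereal (infdist x S))"

definition ccp_cone :: "'m::euclidean_space set \<Rightarrow> bool" where
  "ccp_cone C \<longleftrightarrow> closed C \<and> convex C \<and> cone C \<and> C \<noteq> {0} \<and> C \<inter> uminus ` C \<subseteq> {0}"

definition VEP_sol ::
  "('p \<Rightarrow> 'n \<Rightarrow> 'n \<Rightarrow> 'm) \<Rightarrow> ('p \<Rightarrow> 'n set) \<Rightarrow> 'm set \<Rightarrow> 'p \<Rightarrow> 'n set" where
  "VEP_sol f K C \<xi> = {x \<in> K \<xi>. \<forall>z\<in>K \<xi>. f \<xi> x z \<in> C}"

definition gph :: "('p \<Rightarrow> 'n set) \<Rightarrow> ('p \<times> 'n) set" where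
  "gph E = {(\<xi>, x). x \<in> E \<xi>}"

definition nu_fn ::
  "('p \<Rightarrow> 'n \<Rightarrow> 'n \<Rightarrow> 'm::metric_space) \<Rightarrow> ('p \<Rightarrow> 'n set) \<Rightarrow> 'm set \<Rightarrow> 'p \<Rightarrow> 'n \<Rightarrow> ereal" where
  "nu_fn f K C \<xi> x = (SUP z\<in>K \<xi>. ereal (infdist (f \<xi> x z) C))"

definition mu_fn :: "('p \<Rightarrow> 'n::metric_space set) \<Rightarrow> 'p \<Rightarrow> 'n \<Rightarrow> real" where
  "mu_fn K \<xi> x = infdist x (K \<xi>)"

definition merit ::
  "('p \<Rightarrow> 'n::metric_space \<Rightarrow> 'n \<Rightarrow> 'm::metric_space) \<Rightarrow> ('p \<Rightarrow> 'n set) \<Rightarrow> 'm set \<Rightarrow> 'p \<Rightarrow> 'n \<Rightarrow> ereal" where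
  "merit f K C \<xi> x = nu_fn f K C \<xi> x + ereal (mu_fn K \<xi> x)"

text \<open>Subtransversality of two sets at a point (first definition in the paper);
  S + r B is the union of closed balls of radius r around points of S.\<close>
definition subtransversal :: "'a::real_normed_vector set \<Rightarrow> 'a set \<Rightarrow> 'a \<Rightarrow> bool" where
  "subtransversal S1 S2 s \<longleftrightarrow> (\<exists>\<alpha>>0. \<exists>\<delta>>0. \<forall>\<rho>. 0 \<le> \<rho> \<and> \<rho> < \<delta> \<longrightarrow>
     (\<Union>a\<in>S1. cball a (\<alpha> * \<rho>)) \<inter> (\<Union>b\<in>S2. cball b (\<alpha> * \<rho>)) \<inter> cball s \<delta>
       \<subseteq> (\<Union>c\<in>S1 \<inter> S2. cball c \<rho>))"

definition MPEC_local_sol ::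
  "('p::metric_space \<Rightarrow> 'n::metric_space \<Rightarrow> real) \<Rightarrow> ('p \<Rightarrow> 'n set) \<Rightarrow> 'p set \<Rightarrow> 'p \<Rightarrow> 'n \<Rightarrow> bool" where
  "MPEC_local_sol \<phi> E \<Omega> \<xi>0 x0 \<longleftrightarrow> \<xi>0 \<in> \<Omega> \<and> x0 \<in> E \<xi>0 \<and>
     (\<exists>\<epsilon>>0. \<forall>\<xi> x. \<xi> \<in> \<Omega> \<and> x \<in> E \<xi> \<and> dist (\<xi>, x) (\<xi>0, x0) < \<epsilon> \<longrightarrow> \<phi> \<xi>0 x0 \<le> \<phi> \<xi> x)"

end

theory Submission
  imports Defs
begin

text \<open>Subtransversality of \<open>\<Omega> \<times> \<real>\<^sup>n\<close> and \<open>gph E\<close> bounds the distance to their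
  intersection, the feasible set of (MPEC), by a multiple of \<open>max (dist(\<xi>, \<Omega>), dist((\<xi>, x), gph E))\<close>.
  A Lipschitz objective that is locally minimal on a closed set \<open>S\<close> stays locally minimal after adding
  \<open>L dist(\<cdot>, S)\<close>: compare with its value at a nearest point of \<open>S\<close>. Finally
  \<open>dist((\<xi>, x), gph E) \<le> dist(x, E \<xi>)\<close>, which the uniform error bound controls by the merit
  function.\<close>

lemma infdist_greatest: "A \<noteq> {} \<Longrightarrow> (\<And>a. a \<in> A \<Longrightarrow> d \<le> dist x a) \<Longrightarrow> d \<le> infdist x A"
  by (simp add: infdist_notempty cINF_greatest)

lemma infdist_lessE:
  assumes "A \<noteq> {}" "infdist x A < r"
  obtains a where "a \<in> A" "dist x a < r"
  using assms by (auto simp: infdist_notempty cINF_less_iff)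

lemma subtransversal_infdist_le:
  fixes S1 S2 :: "'a::real_normed_vector set"
  assumes subtr: "subtransversal S1 S2 s" and s: "s \<in> S1" "s \<in> S2"
  obtains \<kappa> r where "\<kappa> > 0" "r > 0"
    "\<And>w. w \<in> ball s r \<Longrightarrow> infdist w (S1 \<inter> S2) \<le> \<kappa> * max (infdist w S1) (infdist w S2)"
proof -
  obtain \<alpha> \<delta> where \<alpha>: "\<alpha> > 0" and \<delta>: "\<delta> > 0" and incl: "\<forall>\<rho>. 0 \<le> \<rho> \<and> \<rho> < \<delta> \<longrightarrow>
     (\<Union>a\<in>S1. cball a (\<alpha> * \<rho>)) \<inter> (\<Union>b\<in>S2. cball b (\<alpha> * \<rho>)) \<inter> cball s \<delta>
       \<subseteq> (\<Union>c\<in>S1 \<inter> S2. cball c \<rho>)"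
    using subtr unfolding subtransversal_def by blast
  have "infdist w (S1 \<inter> S2) \<le> max (infdist w S1) (infdist w S2) / \<alpha>"
    if w: "w \<in> ball s (min \<delta> (\<alpha> * \<delta>))" for w
  proof -
    define t where "t = max (infdist w S1) (infdist w S2)"
    have "0 \<le> t"
      by (simp add: t_def infdist_nonneg le_max_iff_disj)
    have "t \<le> dist w s"
      using infdist_le[OF s(1), of w] infdist_le[OF s(2), of w] by (simp add: t_def)
    then have "t / \<alpha> < \<delta>"
      using w \<alpha> by (simp add: dist_commute divide_less_eq mult.commute)
    then show ?thesis unfolding t_def[symmetric]
    proof (rule dense_ge_bounded)
      fix \<rho> assume \<rho>: "t / \<alpha> < \<rho>" "\<rho> < \<delta>"
      then have "t < \<alpha> * \<rho>"
        using \<alpha> by (simp add: divide_less_eq mult.commute)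
      then have d1: "infdist w S1 < \<alpha> * \<rho>" and d2: "infdist w S2 < \<alpha> * \<rho>"
        by (simp_all add: t_def)
      obtain a where "a \<in> S1" "dist w a < \<alpha> * \<rho>"
        by (rule infdist_lessE[OF _ d1]) (use s(1) in auto)
      then have "w \<in> (\<Union>a\<in>S1. cball a (\<alpha> * \<rho>))"
        by (intro UN_I[of a]) (auto simp: dist_commute)
      moreover obtain b where "b \<in> S2" "dist w b < \<alpha> * \<rho>"
        by (rule infdist_lessE[OF _ d2]) (use s(2) in auto)
      then have "w \<in> (\<Union>b\<in>S2. cball b (\<alpha> * \<rho>))"
        by (intro UN_I[of b]) (auto simp: dist_commute)
      moreover have "w \<in> cball s \<delta>"
        using w by (simp add: dist_commute)
      moreover have "0 \<le> \<rho>"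
        using \<rho>(1) divide_nonneg_pos[OF \<open>0 \<le> t\<close> \<alpha>] by linarith
      ultimately have "w \<in> (\<Union>c\<in>S1 \<inter> S2. cball c \<rho>)"
        using incl \<rho>(2) by (meson IntI subsetD)
      then obtain c where "c \<in> S1 \<inter> S2" "dist w c \<le> \<rho>"
        by (auto simp: dist_commute)
      then show "infdist w (S1 \<inter> S2) \<le> \<rho>"
        by (rule infdist_le2)
    qed
  qed
  with \<alpha> \<delta> show thesis
    by (intro that[of "1 / \<alpha>" "min \<delta> (\<alpha> * \<delta>)"]) auto
qed

lemma lipschitz_local_min_exact_penalty:
  fixes \<phi> :: "'a::heine_borel \<Rightarrow> real"
  assumes S: "closed S" "s \<in> S"
    and lip: "lipschitz_on L (ball s r) \<phi>" "r > 0"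
    and min: "\<And>y. y \<in> S \<Longrightarrow> dist y s < \<epsilon> \<Longrightarrow> \<phi> s \<le> \<phi> y" "\<epsilon> > 0"
  obtains \<rho> where "\<rho> > 0" "\<And>w. w \<in> ball s \<rho> \<Longrightarrow> \<phi> s \<le> \<phi> w + L * infdist w S"
proof
  fix w assume w: "w \<in> ball s (min \<epsilon> r / 2)"
  obtain c where c: "c \<in> S" "infdist w S = dist w c"
    using infdist_attains_inf[OF S(1)] S(2) by blast
  have "dist c s \<le> dist w c + dist w s"
    by (metis dist_commute dist_triangle)
  also have "\<dots> \<le> 2 * dist w s"
    using infdist_le[OF S(2), of w] c(2) by simp
  finally have "dist c s < min \<epsilon> r"
    using w by (simp add: dist_commute)
  then have "\<phi> s \<le> \<phi> c"
    using min(1)[OF c(1)] by simp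
  moreover have "c \<in> ball s r" "w \<in> ball s r"
    using \<open>dist c s < min \<epsilon> r\<close> w zero_le_dist[of s w] unfolding mem_ball dist_commute[of s]
    by linarith+
  then have "\<phi> c \<le> \<phi> w + L * dist c w"
    using lipschitz_onD[OF lip(1)] by (fastforce simp: dist_real_def)
  ultimately show "\<phi> s \<le> \<phi> w + L * infdist w S"
    using c(2) by (simp add: dist_commute)
qed (use lip(2) min(2) in auto)

lemma subtransversal_exact_penalty:
  fixes \<phi> :: "'a::{heine_borel, real_normed_vector} \<Rightarrow> real"
  assumes closed: "closed S1" "closed S2" and s: "s \<in> S1" "s \<in> S2"
    and subtr: "subtransversal S1 S2 s"
    and lip: "lipschitz_on L (ball s r) \<phi>" "L \<ge> 0" "r > 0"
    and min: "\<And>y. y \<in> S1 \<inter> S2 \<Longrightarrow> dist y s < \<epsilon> \<Longrightarrow> \<phi> s \<le> \<phi> y" "\<epsilon> > 0"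
  obtains lam \<rho> where "lam > 0" "\<rho> > 0"
    "\<And>w. w \<in> ball s \<rho> \<Longrightarrow> \<phi> s \<le> \<phi> w + lam * max (infdist w S1) (infdist w S2)"
proof -
  obtain \<kappa> r' where \<kappa>: "\<kappa> > 0" "r' > 0" and bound: "\<And>w. w \<in> ball s r' \<Longrightarrow>
      infdist w (S1 \<inter> S2) \<le> \<kappa> * max (infdist w S1) (infdist w S2)"
    using subtransversal_infdist_le[OF subtr s] by blast
  obtain \<rho> where \<rho>: "\<rho> > 0" and pen: "\<And>w. w \<in> ball s \<rho> \<Longrightarrow> \<phi> s \<le> \<phi> w + L * infdist w (S1 \<inter> S2)"
    using lipschitz_local_min_exact_penalty[of "S1 \<inter> S2" s L r \<phi> \<epsilon>] closed s lip min by blast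
  have "\<phi> s \<le> \<phi> w + (L * \<kappa> + 1) * max (infdist w S1) (infdist w S2)"
    if w: "w \<in> ball s (min \<rho> r')" for w
  proof -
    have "L * infdist w (S1 \<inter> S2) \<le> L * (\<kappa> * max (infdist w S1) (infdist w S2))"
      using bound[of w] w lip(2) by (simp add: mult_left_mono)
    also have "\<dots> \<le> (L * \<kappa> + 1) * max (infdist w S1) (infdist w S2)"
      by (simp add: algebra_simps infdist_nonneg le_max_iff_disj)
    finally show ?thesis
      using pen[of w] w by simp
  qed
  moreover have "L * \<kappa> + 1 > 0"
    using \<kappa> lip(2) by (simp add: add_nonneg_pos)
  ultimately show thesis
    using \<kappa> \<rho>
    by (intro that[of "L * \<kappa> + 1" "min \<rho> r'"]) auto
qed

lemma infdist_Times_UNIV_le: "infdist (a, b) (A \<times> UNIV) \<le> infdist a A"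
proof (cases "A = {}")
  case False
  show ?thesis
  proof (rule infdist_greatest[OF False])
    fix a' assume "a' \<in> A"
    then have "infdist (a, b) (A \<times> UNIV) \<le> dist (a, b) (a', b)"
      by (intro infdist_le) simp
    then show "infdist (a, b) (A \<times> UNIV) \<le> dist a a'"
      by (simp add: dist_Pair_Pair)
  qed
qed (simp add: infdist_def)

lemma infdist_gph_le:
  assumes "E \<xi> \<noteq> {}"
  shows "infdist (\<xi>, x) (gph E) \<le> infdist x (E \<xi>)"
proof (rule infdist_greatest[OF assms])
  fix y assume "y \<in> E \<xi>"
  then have "infdist (\<xi>, x) (gph E) \<le> dist (\<xi>, x) (\<xi>, y)"
    by (intro infdist_le) (simp add: gph_def)
  then show "infdist (\<xi>, x) (gph E) \<le> dist x y"
    by (simp add: dist_Pair_Pair)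
qed

lemma max_infdist_Times_gph_le:
  assumes "edist x (E \<xi>) \<le> ereal d"
  shows "max (infdist (\<xi>, x) (\<Omega> \<times> UNIV)) (infdist (\<xi>, x) (gph E)) \<le> infdist \<xi> \<Omega> + d"
proof -
  have "E \<xi> \<noteq> {}" and "infdist x (E \<xi>) \<le> d"
    using assms by (auto simp: edist_def split: if_splits)
  then show ?thesis
    using infdist_Times_UNIV_le[of \<xi> x \<Omega>] infdist_gph_le[of E \<xi> x] infdist_nonneg[of \<xi> \<Omega>]
      infdist_nonneg[of x "E \<xi>"]
    by linarith
qed

lemma merit_nonneg:
  assumes "K \<xi> \<noteq> {}"
  shows "0 \<le> merit f K C \<xi> x"
proof -
  obtain z where "z \<in> K \<xi>"
    using assms by blast
  then show ?thesis
    unfolding merit_def nu_fn_def mu_fn_def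
    by (auto intro!: add_nonneg_nonneg SUP_upper2 simp: infdist_nonneg)
qed

lemma merit_VEP_sol:
  assumes "K \<xi> \<noteq> {}" "x \<in> VEP_sol f K C \<xi>"
  shows "merit f K C \<xi> x = 0"
proof -
  have "nu_fn f K C \<xi> x = (SUP z\<in>K \<xi>. 0)"
    using assms(2) unfolding nu_fn_def VEP_sol_def by (intro SUP_cong) (auto simp: zero_ereal_def)
  then show ?thesis
    using assms by (simp add: merit_def mu_fn_def VEP_sol_def zero_ereal_def)
qed

lemma ereal_le_add_penalty:
  assumes "lam > 0" "\<gamma> > 0" "0 \<le> M" and real: "\<And>m. M = ereal m \<Longrightarrow> a \<le> b + lam * (d + m / \<gamma>)"
  shows "ereal a \<le> ereal b + ereal lam * (ereal d + M / ereal \<gamma>)"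
  using assms by (cases M) auto

theorem mainTheorem8:
  fixes f :: "'p::euclidean_space \<Rightarrow> 'n::euclidean_space \<Rightarrow> 'n \<Rightarrow> 'm::euclidean_space"
    and K :: "'p \<Rightarrow> 'n set"
    and C :: "'m set"
    and \<phi> :: "'p \<Rightarrow> 'n \<Rightarrow> real"
    and \<Omega> :: "'p set"
    and \<xi>0 :: 'p and x0 :: 'n
    and \<delta> \<gamma> :: real
  assumes C: "ccp_cone C"
    and K_closed: "closed (gph K)"
    and K_ne: "\<And>\<xi>. K \<xi> \<noteq> {}"
    and \<Omega>_closed: "closed \<Omega>"
    and locsol: "MPEC_local_sol \<phi> (VEP_sol f K C) \<Omega> \<xi>0 x0"
    and lip: "\<exists>L r. r > 0 \<and> L \<ge> 0 \<and> lipschitz_on L (ball (\<xi>0, x0) r) (\<lambda>(\<xi>, x). \<phi> \<xi> x)"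
    and gph_closed: "closed (gph (VEP_sol f K C))"
    and subtr: "subtransversal (\<Omega> \<times> UNIV) (gph (VEP_sol f K C)) (\<xi>0, x0)"
    and \<delta>pos: "\<delta> > 0" and \<gamma>pos: "\<gamma> > 0"
    and errb: "\<And>\<xi> x. \<xi> \<in> cball \<xi>0 \<delta> \<Longrightarrow> x \<in> cball x0 \<delta> \<Longrightarrow>
                 edist x (VEP_sol f K C \<xi>) \<le> merit f K C \<xi> x / ereal \<gamma>"
  shows "\<exists>lam>0. \<exists>\<epsilon>>0. \<forall>\<xi> x. dist (\<xi>, x) (\<xi>0, x0) < \<epsilon> \<longrightarrow>
           ereal (\<phi> \<xi>0 x0) + ereal lam * (ereal (infdist \<xi>0 \<Omega>) + merit f K C \<xi>0 x0 / ereal \<gamma>)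
             \<le> ereal (\<phi> \<xi> x) + ereal lam * (ereal (infdist \<xi> \<Omega>) + merit f K C \<xi> x / ereal \<gamma>)"
proof -
  let ?E = "VEP_sol f K C" and ?\<Phi> = "\<lambda>(\<xi>, x). \<phi> \<xi> x"
  obtain \<epsilon> where sol: "\<xi>0 \<in> \<Omega>" "x0 \<in> ?E \<xi>0" and "\<epsilon> > 0"
    and min: "\<And>w. w \<in> (\<Omega> \<times> UNIV) \<inter> gph ?E \<Longrightarrow> dist w (\<xi>0, x0) < \<epsilon> \<Longrightarrow> ?\<Phi> (\<xi>0, x0) \<le> ?\<Phi> w"
    using locsol unfolding MPEC_local_sol_def gph_def by fast
  obtain L r where "r > 0" "L \<ge> 0" "lipschitz_on L (ball (\<xi>0, x0) r) ?\<Phi>"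
    using lip by blast
  then obtain lam \<rho> where "lam > 0" "\<rho> > 0" and penalty: "\<And>w. w \<in> ball (\<xi>0, x0) \<rho> \<Longrightarrow>
      ?\<Phi> (\<xi>0, x0) \<le> ?\<Phi> w + lam * max (infdist w (\<Omega> \<times> UNIV)) (infdist w (gph ?E))"
    using subtransversal_exact_penalty[OF closed_Times[OF \<Omega>_closed closed_UNIV] gph_closed _ _ subtr,
        of L r ?\<Phi> \<epsilon>] sol min \<open>\<epsilon> > 0\<close> by (auto simp: gph_def)
  have "ereal (\<phi> \<xi>0 x0) \<le> ereal (\<phi> \<xi> x) + ereal lam * (ereal (infdist \<xi> \<Omega>) + merit f K C \<xi> x / ereal \<gamma>)"
    if near: "dist (\<xi>, x) (\<xi>0, x0) < min \<rho> \<delta>" for \<xi> x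
  proof (rule ereal_le_add_penalty[OF \<open>lam > 0\<close> \<gamma>pos merit_nonneg[of K, OF K_ne]])
    fix m assume m: "merit f K C \<xi> x = ereal m"
    have "\<xi> \<in> cball \<xi>0 \<delta>" "x \<in> cball x0 \<delta>"
      using near dist_fst_le[of "(\<xi>, x)" "(\<xi>0, x0)"] dist_snd_le[of "(\<xi>, x)" "(\<xi>0, x0)"]
      by (auto simp: dist_commute)
    from errb[OF this] have "edist x (?E \<xi>) \<le> ereal (m / \<gamma>)"
      using m \<gamma>pos by simp
    then have "max (infdist (\<xi>, x) (\<Omega> \<times> UNIV)) (infdist (\<xi>, x) (gph ?E)) \<le> infdist \<xi> \<Omega> + m / \<gamma>"
      by (rule max_infdist_Times_gph_le)
    then have "lam * max (infdist (\<xi>, x) (\<Omega> \<times> UNIV)) (infdist (\<xi>, x) (gph ?E))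
        \<le> lam * (infdist \<xi> \<Omega> + m / \<gamma>)"
      using \<open>lam > 0\<close> by (simp add: mult_left_mono)
    moreover have "(\<xi>, x) \<in> ball (\<xi>0, x0) \<rho>"
      using near by (simp add: dist_commute)
    ultimately show "\<phi> \<xi>0 x0 \<le> \<phi> \<xi> x + lam * (infdist \<xi> \<Omega> + m / \<gamma>)"
      using penalty[of "(\<xi>, x)"] by simp
  qed
  moreover have "ereal lam * (ereal (infdist \<xi>0 \<Omega>) + merit f K C \<xi>0 x0 / ereal \<gamma>) = 0"
    using sol merit_VEP_sol[OF K_ne sol(2)] by (simp add: zero_ereal_def)
  ultimately show ?thesis
    using \<open>lam > 0\<close> \<open>\<rho> > 0\<close> \<delta>pos by (intro exI[of _ lam] conjI exI[of _ "min \<rho> \<delta>"]) auto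
qed

end
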